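(* Let $n\ge2$, let $a,b\in H_n\rtimes S_n$ satisfy $\sigma_a=\sigma_b$, and let $x\in H_n$ with $x^{-1}ax=b$. Let $[k]_a$ be a class of size $q$, let $i_1\in[k]_a$ and $i_s=i_1\sigma_a^{s-1}$ for $1\le s\le q$. Then for all $1\le s\le q$, $$t_{i_s}(x)=t_{i_1}(x)+\sum_{d=1}^{s-1}\big(t_{i_d}(\omega_b)-t_{i_d}(\omega_a)\big).$$ In particular the values $t_i(x)$, $i\in[k]_a$, are determined by $t_{i_1}(x)$ and the numbers $t_i(a),t_i(b)$, $i\in[k]_a$.
   Context: $\mathbb{N}=\{1,2,\dots\}$, $X_n=\{1,\dots,n\}\times\mathbb{N}$, permutations act on the right. $H_n$ is the group of bijections $g$ of $X_n$ with $z_i(g)\in\mathbb{N}$, $t_i(g)\in\mathbb{Z}$ such that $(i,m)g=(i,m+t_i(g))$ for all $m\ge z_i(g)$. $S_n$ acts by $(i,m)\sigma=(i\sigma,m)$, and $H_n\rtimes S_n\le\mathrm{Sym}(X_n)$ is generated by $H_n$ and these; each $g\in H_n\rtimes S_n$ is uniquely $g=\omega_g\sigma_g$ with $\omega_g\in H_n$, $\sigma_g\in S_n$, and $t_i(g):=t_i(\omega_g)$. The class $[i]_g$ is the orbit of $i$ under $\langle\sigma_g\rangle$. *)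

theory Defs
  imports "HOL-Combinatorics.Permutations"
begin

text \<open>Elements of Sym(X_n) are
  represented as functions on nat x nat that permute X_n (identity outside).
  Permutations act on the right: the product g h (first g, then h) is h o g.\<close>

definition Xn :: "nat \<Rightarrow> (nat \<times> nat) set" where
  "Xn n = {1..n} \<times> {1..}"

definition shifts_by :: "(nat \<times> nat \<Rightarrow> nat \<times> nat) \<Rightarrow> nat \<Rightarrow> int \<Rightarrow> bool" where
  "shifts_by g i t \<longleftrightarrow> (\<exists>z::nat. \<forall>m\<ge>z.
      fst (g (i, m)) = i \<and> int (snd (g (i, m))) = int m + t)"

definition Hn :: "nat \<Rightarrow> (nat \<times> nat \<Rightarrow> nat \<times> nat) set" where
  "Hn n = {g. g permutes Xn n \<and> (\<forall>i\<in>{1..n}. \<exists>t. shifts_by g i t)}"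

definition tr :: "(nat \<times> nat \<Rightarrow> nat \<times> nat) \<Rightarrow> nat \<Rightarrow> int" where
  "tr g i = (THE t. shifts_by g i t)"

definition liftS :: "nat \<Rightarrow> (nat \<Rightarrow> nat) \<Rightarrow> nat \<times> nat \<Rightarrow> nat \<times> nat" where
  "liftS n \<sigma> p = (if p \<in> Xn n then (\<sigma> (fst p), snd p) else p)"

definition HSn :: "nat \<Rightarrow> (nat \<times> nat \<Rightarrow> nat \<times> nat) set" where
  "HSn n = {g. \<exists>\<omega> \<sigma>. \<omega> \<in> Hn n \<and> \<sigma> permutes {1..n} \<and> g = liftS n \<sigma> \<circ> \<omega>}"

definition sigma_of :: "nat \<Rightarrow> (nat \<times> nat \<Rightarrow> nat \<times> nat) \<Rightarrow> nat \<Rightarrow> nat" where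
  "sigma_of n g = (THE \<sigma>. \<sigma> permutes {1..n} \<and> (\<exists>\<omega>\<in>Hn n. g = liftS n \<sigma> \<circ> \<omega>))"

definition omega_of :: "nat \<Rightarrow> (nat \<times> nat \<Rightarrow> nat \<times> nat) \<Rightarrow> nat \<times> nat \<Rightarrow> nat \<times> nat" where
  "omega_of n g = (THE \<omega>. \<omega> \<in> Hn n \<and> (\<exists>\<sigma>. \<sigma> permutes {1..n} \<and> g = liftS n \<sigma> \<circ> \<omega>))"

definition cls :: "nat \<Rightarrow> (nat \<times> nat \<Rightarrow> nat \<times> nat) \<Rightarrow> nat \<Rightarrow> nat set" where
  "cls n g i = {(sigma_of n g ^^ j) i | j. True}"

end

theory Submission
  imports Defs
begin

text \<open>Write \<open>a = \<omega>\<^sub>a \<sigma>\<close> and \<open>b = \<omega>\<^sub>b \<sigma>\<close>. As \<open>\<sigma>\<close> only relabels rows, the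
  conjugate \<open>\<sigma> x \<sigma>\<^sup>-\<^sup>1\<close> eventually translates row \<open>i\<close> by \<open>t\<^bsub>i\<sigma>\<^esub>(x)\<close>. So
  \<open>a x = x b\<close>, i.e. \<open>\<omega>\<^sub>a (\<sigma> x \<sigma>\<^sup>-\<^sup>1) = x \<omega>\<^sub>b\<close>, compared on the eventual translation
  of row \<open>i\<close> gives \<open>t\<^bsub>i\<sigma>\<^esub>(x) = t\<^sub>i(x) + t\<^sub>i(\<omega>\<^sub>b) - t\<^sub>i(\<omega>\<^sub>a)\<close>; iterating
  along the \<open>\<sigma>\<close>-orbit of \<open>i\<^sub>1\<close> yields the formula for every \<open>s\<close>.\<close>

lemma shifts_by_unique:
  assumes "shifts_by g i t" and "shifts_by g i t'"
  shows "t = t'"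
proof -
  obtain z where z: "\<forall>m\<ge>z. int (snd (g (i, m))) = int m + t"
    using assms(1) unfolding shifts_by_def by blast
  obtain z' where z': "\<forall>m\<ge>z'. int (snd (g (i, m))) = int m + t'"
    using assms(2) unfolding shifts_by_def by blast
  show ?thesis
    using z[rule_format, of "max z z'"] z'[rule_format, of "max z z'"] by simp
qed

lemma tr_eqI: "shifts_by g i t \<Longrightarrow> tr g i = t"
  unfolding tr_def using shifts_by_unique by blast

lemma Hn_shifts_by_tr: "g \<in> Hn n \<Longrightarrow> i \<in> {1..n} \<Longrightarrow> shifts_by g i (tr g i)"
  unfolding Hn_def using tr_eqI by blast

lemma shifts_by_comp:
  assumes "shifts_by g i s" and "shifts_by h i t"
  shows "shifts_by (h \<circ> g) i (s + t)"
proof -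
  obtain zg where zg: "\<forall>m\<ge>zg. fst (g (i, m)) = i \<and> int (snd (g (i, m))) = int m + s"
    using assms(1) unfolding shifts_by_def by blast
  obtain zh where zh: "\<forall>m\<ge>zh. fst (h (i, m)) = i \<and> int (snd (h (i, m))) = int m + t"
    using assms(2) unfolding shifts_by_def by blast
  have "fst (h (g (i, m))) = i \<and> int (snd (h (g (i, m)))) = int m + (s + t)"
    if "m \<ge> zg + zh + nat \<bar>s\<bar>" for m
  proof -
    have g: "g (i, m) = (i, snd (g (i, m)))" "int (snd (g (i, m))) = int m + s"
      using zg that by (auto simp: prod_eq_iff)
    then have "snd (g (i, m)) \<ge> zh"
      using that by linarith
    then show ?thesis
      using zh g by (metis add.assoc)
  qed
  then show ?thesis
    unfolding shifts_by_def comp_def by blast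
qed

lemma Xn_relabel:
  assumes "\<sigma> permutes {1..n}"
  shows "(\<sigma> j, m) \<in> Xn n \<longleftrightarrow> (j, m) \<in> Xn n"
  using permutes_in_image[OF assms, of j] by (simp add: Xn_def)

lemma liftS_id: "liftS n id = id"
  unfolding liftS_def by auto

lemma liftS_comp:
  assumes "\<sigma> permutes {1..n}"
  shows "liftS n \<tau> \<circ> liftS n \<sigma> = liftS n (\<tau> \<circ> \<sigma>)"
proof
  fix p :: "nat \<times> nat"
  show "(liftS n \<tau> \<circ> liftS n \<sigma>) p = liftS n (\<tau> \<circ> \<sigma>) p"
    using Xn_relabel[OF assms, of "fst p" "snd p"] by (simp add: liftS_def)
qed

lemma liftS_inv_comp:
  assumes "\<sigma> permutes {1..n}"
  shows "liftS n (inv \<sigma>) \<circ> liftS n \<sigma> = id"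
  using assms by (simp add: liftS_comp permutes_inv_o(2) liftS_id)

lemma shifts_by_liftS_conj:
  assumes "\<sigma> permutes {1..n}" and "i \<in> {1..n}" and "shifts_by x (\<sigma> i) t"
  shows "shifts_by (liftS n (inv \<sigma>) \<circ> x \<circ> liftS n \<sigma>) i t"
proof -
  obtain z where z: "\<forall>m\<ge>z. fst (x (\<sigma> i, m)) = \<sigma> i \<and> int (snd (x (\<sigma> i, m))) = int m + t"
    using assms(3) unfolding shifts_by_def by blast
  have \<sigma>i: "\<sigma> i \<in> {1..n}"
    using permutes_in_image[OF assms(1)] assms(2) by simp
  have "fst ((liftS n (inv \<sigma>) \<circ> x \<circ> liftS n \<sigma>) (i, m)) = i
        \<and> int (snd ((liftS n (inv \<sigma>) \<circ> x \<circ> liftS n \<sigma>) (i, m))) = int m + t"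
    if "m \<ge> z + nat \<bar>t\<bar> + 1" for m
  proof -
    define m' where "m' = snd (x (\<sigma> i, m))"
    have x: "x (\<sigma> i, m) = (\<sigma> i, m')" "int m' = int m + t"
      using z that by (auto simp: m'_def prod_eq_iff)
    then have "(\<sigma> i, m') \<in> Xn n" "(i, m) \<in> Xn n"
      using \<sigma>i assms(2) that by (simp_all add: Xn_def)
    then show ?thesis
      using x by (simp add: liftS_def permutes_inverses(2)[OF assms(1)])
  qed
  then show ?thesis
    unfolding shifts_by_def by blast
qed

lemma liftS_comp_Hn_unique:
  assumes \<omega>: "\<omega> \<in> Hn n" and \<omega>': "\<omega>' \<in> Hn n"
    and \<sigma>: "\<sigma> permutes {1..n}" and \<sigma>': "\<sigma>' permutes {1..n}"
    and eq: "liftS n \<sigma> \<circ> \<omega> = liftS n \<sigma>' \<circ> \<omega>'"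
  shows "\<sigma> = \<sigma>' \<and> \<omega> = \<omega>'"
proof -
  define \<tau> where "\<tau> = inv \<sigma>' \<circ> \<sigma>"
  have \<tau>: "\<tau> permutes {1..n}"
    unfolding \<tau>_def using \<sigma> \<sigma>' by (simp add: permutes_compose permutes_inv)
  have \<omega>'_eq: "\<omega>' = liftS n \<tau> \<circ> \<omega>"
  proof -
    have "\<omega>' = liftS n (inv \<sigma>') \<circ> liftS n \<sigma>' \<circ> \<omega>'"
      using liftS_inv_comp[OF \<sigma>'] by simp
    also have "\<dots> = liftS n (inv \<sigma>') \<circ> liftS n \<sigma> \<circ> \<omega>"
      by (metis eq comp_assoc)
    also have "\<dots> = liftS n \<tau> \<circ> \<omega>"
      by (simp add: \<tau>_def liftS_comp[OF \<sigma>])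
    finally show ?thesis .
  qed
  have "\<tau> i = i" if i: "i \<in> {1..n}" for i
  proof -
    obtain z where z: "\<forall>m\<ge>z. fst (\<omega> (i, m)) = i"
      using Hn_shifts_by_tr[OF \<omega> i] unfolding shifts_by_def by blast
    obtain z' where z': "\<forall>m\<ge>z'. fst (\<omega>' (i, m)) = i"
      using Hn_shifts_by_tr[OF \<omega>' i] unfolding shifts_by_def by blast
    define m where "m = z + z' + 1"
    have "(i, m) \<in> Xn n"
      using i by (simp add: Xn_def m_def)
    then have "\<omega> (i, m) \<in> Xn n"
      using \<omega> permutes_in_image by (fastforce simp: Hn_def)
    then have "fst (\<omega>' (i, m)) = \<tau> i"
      using z by (simp add: \<omega>'_eq liftS_def m_def)
    then show ?thesis
      using z' by (simp add: m_def)
  qed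
  then have "\<tau> = id"
    using \<tau> by (metis eq_id_iff permutes_not_in)
  then have "\<sigma> = \<sigma>'"
    unfolding \<tau>_def using \<sigma>' by (metis comp_id comp_assoc permutes_inv_o(1) id_comp)
  then show ?thesis
    using \<omega>'_eq \<open>\<tau> = id\<close> by (simp add: liftS_id)
qed

lemma HSn_decomposition:
  assumes "g \<in> HSn n"
  shows "sigma_of n g permutes {1..n}" and "omega_of n g \<in> Hn n"
    and "g = liftS n (sigma_of n g) \<circ> omega_of n g"
proof -
  obtain \<omega> \<sigma> where h: "\<omega> \<in> Hn n" "\<sigma> permutes {1..n}" "g = liftS n \<sigma> \<circ> \<omega>"
    using assms unfolding HSn_def by blast
  have "sigma_of n g = \<sigma>"
    unfolding sigma_of_def using h liftS_comp_Hn_unique by (intro the_equality) blast+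
  moreover have "omega_of n g = \<omega>"
    unfolding omega_of_def using h liftS_comp_Hn_unique by (intro the_equality) blast+
  ultimately show "sigma_of n g permutes {1..n}" "omega_of n g \<in> Hn n"
    "g = liftS n (sigma_of n g) \<circ> omega_of n g"
    using h by simp_all
qed

lemma tr_intertwining_step:
  assumes x: "x \<in> Hn n" and \<omega>\<^sub>a: "\<omega>\<^sub>a \<in> Hn n" and \<omega>\<^sub>b: "\<omega>\<^sub>b \<in> Hn n"
    and \<sigma>: "\<sigma> permutes {1..n}" and i: "i \<in> {1..n}"
    and eq: "x \<circ> liftS n \<sigma> \<circ> \<omega>\<^sub>a = liftS n \<sigma> \<circ> \<omega>\<^sub>b \<circ> x"
  shows "tr x (\<sigma> i) = tr x i + (tr \<omega>\<^sub>b i - tr \<omega>\<^sub>a i)"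
proof -
  have \<sigma>i: "\<sigma> i \<in> {1..n}"
    using permutes_in_image[OF \<sigma>] i by simp
  have "liftS n (inv \<sigma>) \<circ> x \<circ> liftS n \<sigma> \<circ> \<omega>\<^sub>a = liftS n (inv \<sigma>) \<circ> liftS n \<sigma> \<circ> \<omega>\<^sub>b \<circ> x"
    by (metis eq comp_assoc)
  then have conj: "(liftS n (inv \<sigma>) \<circ> x \<circ> liftS n \<sigma>) \<circ> \<omega>\<^sub>a = \<omega>\<^sub>b \<circ> x"
    by (simp add: liftS_inv_comp[OF \<sigma>])
  have "shifts_by ((liftS n (inv \<sigma>) \<circ> x \<circ> liftS n \<sigma>) \<circ> \<omega>\<^sub>a) i (tr \<omega>\<^sub>a i + tr x (\<sigma> i))"
    using Hn_shifts_by_tr[OF \<omega>\<^sub>a i] shifts_by_liftS_conj[OF \<sigma> i Hn_shifts_by_tr[OF x \<sigma>i]]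
    by (rule shifts_by_comp)
  moreover have "shifts_by (\<omega>\<^sub>b \<circ> x) i (tr x i + tr \<omega>\<^sub>b i)"
    using Hn_shifts_by_tr[OF x i] Hn_shifts_by_tr[OF \<omega>\<^sub>b i] by (rule shifts_by_comp)
  ultimately show ?thesis
    unfolding conj by (auto dest: shifts_by_unique)
qed

lemma tr_intertwining_funpow:
  assumes x: "x \<in> Hn n" and \<omega>\<^sub>a: "\<omega>\<^sub>a \<in> Hn n" and \<omega>\<^sub>b: "\<omega>\<^sub>b \<in> Hn n"
    and \<sigma>: "\<sigma> permutes {1..n}" and i: "i \<in> {1..n}"
    and eq: "x \<circ> liftS n \<sigma> \<circ> \<omega>\<^sub>a = liftS n \<sigma> \<circ> \<omega>\<^sub>b \<circ> x"
  shows "tr x ((\<sigma> ^^ s) i) = tr x i + (\<Sum>d<s. tr \<omega>\<^sub>b ((\<sigma> ^^ d) i) - tr \<omega>\<^sub>a ((\<sigma> ^^ d) i))"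
proof (induction s)
  case (Suc s)
  have "tr x ((\<sigma> ^^ Suc s) i)
      = tr x ((\<sigma> ^^ s) i) + (tr \<omega>\<^sub>b ((\<sigma> ^^ s) i) - tr \<omega>\<^sub>a ((\<sigma> ^^ s) i))"
    using tr_intertwining_step[OF x \<omega>\<^sub>a \<omega>\<^sub>b \<sigma> permutes_in_funpow_image[OF \<sigma> i] eq] by simp
  then show ?case
    using Suc.IH by simp
qed simp

theorem lemma3p10:
  fixes n k q i1 :: nat and a b x :: "nat \<times> nat \<Rightarrow> nat \<times> nat"
  assumes "n \<ge> 2"
    and "a \<in> HSn n" and "b \<in> HSn n" and "sigma_of n a = sigma_of n b"
    and "x \<in> Hn n" and "x \<circ> a \<circ> inv x = b"
    and "k \<in> {1..n}" and "card (cls n a k) = q"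
    and "i1 \<in> cls n a k"
  shows "\<forall>s\<in>{1..q}.
    tr x ((sigma_of n a ^^ (s - 1)) i1) =
      tr x i1 + (\<Sum>d = 1..s - 1.
        tr (omega_of n b) ((sigma_of n a ^^ (d - 1)) i1)
        - tr (omega_of n a) ((sigma_of n a ^^ (d - 1)) i1))"
proof -
  note a = HSn_decomposition[OF assms(2)] and b = HSn_decomposition[OF assms(3)]
  have "x permutes Xn n"
    using assms(5) by (simp add: Hn_def)
  then have "x \<circ> a = b \<circ> x"
    using assms(6) by (metis comp_assoc comp_id permutes_inv_o(2))
  then have eq: "x \<circ> liftS n (sigma_of n a) \<circ> omega_of n a
      = liftS n (sigma_of n a) \<circ> omega_of n b \<circ> x"
    using a(3) b(3) assms(4) by (simp add: comp_assoc)
  have "i1 \<in> {1..n}"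
    using assms(7,9) permutes_in_funpow_image[OF a(1)] by (auto simp: cls_def)
  from tr_intertwining_funpow[OF assms(5) a(2) b(2) a(1) this eq]
  show ?thesis
    by (simp add: sum.atLeast1_atMost_eq)
qed

end
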